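(* Let $\alpha>0$ and $g,h\in\mathbb{R}$ with $h>g$, and put $\gamma=h-g>0$ and $\lambda=1-g$. Assume the generic (nondegenerate) condition: there is no integer $k\geq 0$ with $k\gamma-g=-1$. Let $F_0\in(0,1)$ and $X_0\in\mathbb{R}$, and let $F$ be a differentiable function on an interval $I\ni X_0$ with values in $(0,1)$ satisfying $$\frac{dF}{dX}=\alpha\,(F^g-F^h),\qquad F(X_0)=F_0 .$$ Then for every $X\in I$, writing $F=F(X)$, $$X = X_0+\frac{F^{\lambda}}{\alpha\lambda}\left(1+\frac{\lambda F^{\gamma}}{\gamma}\,\Phi\!\left[F^{\gamma},1,1+\frac{\lambda}{\gamma}\right]\right)-\frac{F_0^{\lambda}}{\alpha\lambda}\left(1+\frac{\lambda F_0^{\gamma}}{\gamma}\,\Phi\!\left[F_0^{\gamma},1,1+\frac{\lambda}{\gamma}\right]\right),$$ where $\Phi$ is Lerch's transcendent. (Under the generic condition $\lambda\neq 0$ and $1+\lambda/\gamma\notin\{0,-1,-2,\dots\}$, so all terms are defined.)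
   Context: Lerch's transcendent is defined by $\Phi[z,s,v]=\sum_{n=0}^{\infty}\frac{z^n}{(v+n)^s}$ for $|z|<1$ and $v\notin\{0,-1,-2,\dots\}$. The differential equation defines the S-distribution: $F$ is the cumulative distribution function, $dF/dX$ the density, and the formula gives the quantile $X$ as a function of the cumulative value $F$. *)

theory Defs
  imports "HOL-Analysis.Analysis"
begin

text \<open>The power uses powr
  (real exponent); in the application s = 1, so (v+n) powr 1 is replaced by plain
  division to allow negative v+n.\<close>
definition LerchPhi :: "real \<Rightarrow> real \<Rightarrow> real \<Rightarrow> real" where
  "LerchPhi z s v = (\<Sum>n. z ^ n / (if s = 1 then v + real n else (v + real n) powr s))"

end

theory Submission imports Defs begin

text \<open>With \<open>\<gamma> = h - g\<close>, \<open>\<lambda> = 1 - g\<close>, \<open>v = \<lambda>/\<gamma>\<close> and \<open>z = y\<^sup>\<gamma>\<close>, the function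
  \<open>H y = y\<^sup>\<lambda> \<Phi>(z,1,v) / \<gamma> = z\<^sup>v \<Phi>(z,1,v) / \<gamma>\<close> satisfies \<open>H' y = 1 / (y\<^sup>g - y\<^sup>h)\<close>, because
  \<open>z\<^sup>v \<Phi>(z,1,v) = \<Sum> z\<^sup>n\<^sup>+\<^sup>v / (n + v)\<close> has derivative \<open>\<Sum> z\<^sup>n\<^sup>+\<^sup>v\<^sup>-\<^sup>1 = z\<^sup>v\<^sup>-\<^sup>1 / (1 - z)\<close>.
  Separating variables in \<open>F' = \<alpha> (F\<^sup>g - F\<^sup>h)\<close> gives \<open>H (F X) - H F\<^sub>0 = \<alpha> (X - X\<^sub>0)\<close>, and the
  shift relation \<open>\<Phi>(z,1,v) = 1/v + z \<Phi>(z,1,v+1)\<close> turns \<open>H y / \<alpha>\<close> into the stated closed form.\<close>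

lemma LerchPhi_1: "LerchPhi z 1 v = (\<Sum>n. z ^ n / (v + real n))"
  by (simp add: LerchPhi_def)

lemma summable_LerchPhi_1:
  fixes z v :: real
  assumes "\<bar>z\<bar> < 1"
  shows "summable (\<lambda>n. z ^ n / (v + real n))"
proof (rule summable_comparison_test_ev)
  show "summable (\<lambda>n. \<bar>z\<bar> ^ n)"
    using assms by (simp add: summable_geometric)
  obtain N :: nat where "real N \<ge> 1 - v"
    using real_arch_simple by blast
  then have "\<forall>\<^sub>F n in sequentially. 1 \<le> v + real n"
    by (intro eventually_sequentiallyI[of N]) simp
  then show "\<forall>\<^sub>F n in sequentially. norm (z ^ n / (v + real n)) \<le> \<bar>z\<bar> ^ n"
  proof eventually_elim
    case (elim n)
    then have "\<bar>z\<bar> ^ n / (v + real n) \<le> \<bar>z\<bar> ^ n"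
      by (simp add: divide_le_eq mult_le_cancel_left1)
    with elim show ?case
      by (simp add: abs_divide power_abs)
  qed
qed

lemma LerchPhi_1_sums:
  "\<bar>z\<bar> < 1 \<Longrightarrow> (\<lambda>n. z ^ n / (v + real n)) sums LerchPhi z 1 v"
  unfolding LerchPhi_1 by (intro summable_sums summable_LerchPhi_1)

(* No hypothesis on v is needed: at a pole the offending terms are z^n / 0 = 0 in both series. *)
lemma LerchPhi_1_shift:
  assumes "\<bar>z\<bar> < 1"
  shows "LerchPhi z 1 v = 1 / v + z * LerchPhi z 1 (v + 1)"
proof -
  have "(\<lambda>n. z * (z ^ n / (v + 1 + real n))) sums (z * LerchPhi z 1 (v + 1))"
    using LerchPhi_1_sums[OF assms] by (rule sums_mult)
  moreover have "(\<lambda>n. z ^ Suc n / (v + real (Suc n))) sums (LerchPhi z 1 v - 1 / v)"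
    by (subst sums_Suc_iff) (simp add: LerchPhi_1_sums assms)
  then have "(\<lambda>n. z * (z ^ n / (v + 1 + real n))) sums (LerchPhi z 1 v - 1 / v)"
    by (simp add: add_ac)
  ultimately show ?thesis
    using sums_unique2 by fastforce
qed

lemma LerchPhi_1_has_real_derivative:
  assumes "\<bar>z\<bar> < 1"
  shows "((\<lambda>z. LerchPhi z 1 v) has_real_derivative
           (\<Sum>n. (real n + 1) / (v + real n + 1) * z ^ n)) (at z)"
proof -
  have "((\<lambda>z. \<Sum>n. 1 / (v + real n) * z ^ n) has_real_derivative
          (\<Sum>n. diffs (\<lambda>n. 1 / (v + real n)) n * z ^ n)) (at z)"
    by (rule termdiffs_strong'[where K = 1]) (use summable_LerchPhi_1 assms in auto)
  then show ?thesis
    by (simp add: LerchPhi_1 diffs_def add_ac)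
qed

lemma LerchPhi_1_ode:
  assumes "\<bar>z\<bar> < 1" and "\<And>n. v + real n \<noteq> 0"
  shows "v * LerchPhi z 1 v + z * (\<Sum>n. (real n + 1) / (v + real n + 1) * z ^ n) = 1 / (1 - z)"
proof -
  let ?D = "\<Sum>n. (real n + 1) / (v + real n + 1) * z ^ n"
  have "summable (\<lambda>n. diffs (\<lambda>n. 1 / (v + real n)) n * z ^ n)"
    by (rule termdiff_converges[where K = 1]) (use summable_LerchPhi_1 assms(1) in auto)
  then have "(\<lambda>n. (real n + 1) / (v + real n + 1) * z ^ n) sums ?D"
    by (simp add: diffs_def add_ac summable_sums)
  with LerchPhi_1_sums[OF assms(1), of "v + 1"]
  have "(\<lambda>n. v * z * (z ^ n / (v + 1 + real n)) + z * ((real n + 1) / (v + real n + 1) * z ^ n))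
          sums (v * z * LerchPhi z 1 (v + 1) + z * ?D)"
    by (intro sums_add sums_mult)
  moreover have "v * z * (z ^ n / (v + 1 + real n)) + z * ((real n + 1) / (v + real n + 1) * z ^ n)
                   = z * z ^ n" for n
  proof -
    have "v + 1 + real n \<noteq> 0"
      using assms(2)[of "Suc n"] by (simp add: add_ac)
    then show ?thesis
      by (simp add: add_ac add_divide_distrib[symmetric] field_simps)
  qed
  ultimately have "(\<lambda>n. z * z ^ n) sums (v * z * LerchPhi z 1 (v + 1) + z * ?D)"
    by simp
  moreover have "(\<lambda>n. z * z ^ n) sums (z * (1 / (1 - z)))"
    using assms(1) by (intro sums_mult geometric_sums) simp
  ultimately have series: "v * z * LerchPhi z 1 (v + 1) + z * ?D = z / (1 - z)"
    using sums_unique2 by fastforce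
  have "v * LerchPhi z 1 v + z * ?D = 1 + (v * z * LerchPhi z 1 (v + 1) + z * ?D)"
    using LerchPhi_1_shift[OF assms(1), of v] assms(2)[of 0] by (simp add: field_simps)
  also have "\<dots> = 1 / (1 - z)"
    unfolding series using assms(1) by (simp add: field_simps)
  finally show ?thesis .
qed

lemma has_real_derivative_powr_LerchPhi_1:
  assumes "0 < z" "z < 1" and "\<And>n. v + real n \<noteq> 0"
  shows "((\<lambda>z. z powr v * LerchPhi z 1 v) has_real_derivative z powr (v - 1) / (1 - z)) (at z)"
proof -
  let ?D = "\<Sum>n. (real n + 1) / (v + real n + 1) * z ^ n"
  have "\<bar>z\<bar> < 1"
    using assms by simp
  have "((\<lambda>z. z powr v * LerchPhi z 1 v) has_real_derivative
          v * z powr (v - 1) * LerchPhi z 1 v + ?D * z powr v) (at z)"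
    by (intro DERIV_mult has_real_derivative_powr LerchPhi_1_has_real_derivative) fact+
  moreover have "z powr v = z powr (v - 1) * z"
    using assms(1) by (simp add: powr_diff)
  then have "v * z powr (v - 1) * LerchPhi z 1 v + ?D * z powr v
               = z powr (v - 1) * (v * LerchPhi z 1 v + z * ?D)"
    by (simp add: algebra_simps)
  ultimately show ?thesis
    using LerchPhi_1_ode[OF \<open>\<bar>z\<bar> < 1\<close> assms(3)] by simp
qed

lemma S_distribution_antiderivative:
  fixes g h y :: real
  assumes "g < h" and "0 < y" "y < 1" and "\<And>n. (1 - g) / (h - g) + real n \<noteq> 0"
  shows "((\<lambda>y. y powr (1 - g) * LerchPhi (y powr (h - g)) 1 ((1 - g) / (h - g)) / (h - g))
           has_real_derivative 1 / (y powr g - y powr h)) (at y)"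
proof -
  define v where "v = (1 - g) / (h - g)"
  define z where "z = y powr (h - g)"
  have "0 < z" "z < 1"
    using assms powr_less_mono2[of "h - g" y 1] by (simp_all add: z_def)
  have "((\<lambda>y. (y powr (h - g)) powr v * LerchPhi (y powr (h - g)) 1 v / (h - g))
          has_real_derivative z powr (v - 1) / (1 - z) * ((h - g) * y powr (h - g - 1)) / (h - g)) (at y)"
    unfolding z_def
    by (intro DERIV_cdivide DERIV_chain2[OF has_real_derivative_powr_LerchPhi_1
          has_real_derivative_powr]) (use \<open>0 < z\<close> \<open>z < 1\<close> assms in \<open>simp_all add: z_def v_def\<close>)
  moreover have "(y powr (h - g)) powr v = y powr (1 - g)" for y
    using assms(1) by (simp add: powr_powr v_def)
  moreover have "z powr (v - 1) / (1 - z) * ((h - g) * y powr (h - g - 1)) / (h - g)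
                   = 1 / (y powr g - y powr h)"
  proof -
    have "z powr (v - 1) * y powr (h - g - 1) = y powr (- g)"
      using assms(1,2) by (simp add: z_def powr_powr v_def powr_add[symmetric] field_simps)
    moreover have "y powr h = y powr g * z"
      by (simp add: z_def powr_add[symmetric])
    moreover have "h - g \<noteq> 0" "1 - z \<noteq> 0"
      using assms(1) \<open>z < 1\<close> by simp_all
    ultimately show ?thesis
      using assms(2) by (simp add: powr_minus divide_simps) (simp add: algebra_simps)
  qed
  ultimately show ?thesis
    by (simp add: v_def)
qed

lemma separation_of_variables:
  fixes F G f :: "real \<Rightarrow> real" and I :: "real set"
  assumes "is_interval I"
    and F': "\<And>x. x \<in> I \<Longrightarrow> (F has_real_derivative c * f (F x)) (at x within I)"
    and G': "\<And>x. x \<in> I \<Longrightarrow> (G has_real_derivative 1 / f (F x)) (at (F x))"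
    and "\<And>x. x \<in> I \<Longrightarrow> f (F x) \<noteq> 0"
    and "x0 \<in> I" "x \<in> I"
  shows "G (F x) - G (F x0) = c * (x - x0)"
proof -
  have "((\<lambda>x. G (F x) - c * x) has_real_derivative 0) (at x within I)" if "x \<in> I" for x
  proof -
    have "((\<lambda>x. G (F x) - c * x) has_real_derivative 1 / f (F x) * (c * f (F x)) - c * 1)
            (at x within I)"
      by (intro DERIV_diff DERIV_cmult DERIV_ident DERIV_chain2[OF G' F'] that)
    with assms(4)[OF that] show ?thesis
      by simp
  qed
  then obtain k where "\<forall>x\<in>I. G (F x) - c * x = k"
    using has_field_derivative_zero_constant[OF is_interval_convex[OF assms(1)]] by blast
  with assms(5,6) show ?thesis
    by (simp add: algebra_simps)
qed

lemma S_distribution_closed_form: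
  fixes g h y :: real
  assumes "g < h" "g \<noteq> 1" and "0 < y" "y < 1"
  shows "y powr (1 - g) / (1 - g)
           * (1 + (1 - g) * y powr (h - g) / (h - g)
                * LerchPhi (y powr (h - g)) 1 (1 + (1 - g) / (h - g)))
         = y powr (1 - g) * LerchPhi (y powr (h - g)) 1 ((1 - g) / (h - g)) / (h - g)"
proof -
  define v where "v = (1 - g) / (h - g)"
  have "\<bar>y powr (h - g)\<bar> < 1"
    using assms powr_less_mono2[of "h - g" y 1] by simp
  note shift = LerchPhi_1_shift[OF this, of v]
  have "v \<noteq> 0"
    using assms(1,2) by (simp add: v_def)
  have "1 + (1 - g) * y powr (h - g) / (h - g) * LerchPhi (y powr (h - g)) 1 (1 + (1 - g) / (h - g))
      = 1 + v * y powr (h - g) * LerchPhi (y powr (h - g)) 1 (v + 1)"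
    by (simp add: v_def add_ac)
  also have "\<dots> = (1 - g) / (h - g) * LerchPhi (y powr (h - g)) 1 v"
    using shift \<open>v \<noteq> 0\<close> by (simp add: field_simps v_def)
  finally show ?thesis
    using assms(2) by (simp add: v_def)
qed

theorem mainTheorem1:
  fixes \<alpha> g h F0 X0 :: real and I :: "real set" and F :: "real \<Rightarrow> real"
  assumes "\<alpha> > 0" and "h > g"
    and generic: "\<not> (\<exists>k::nat. real k * (h - g) - g = -1)"
    and "0 < F0" and "F0 < 1"
    and "is_interval I" and "X0 \<in> I"
    and range: "\<And>x. x \<in> I \<Longrightarrow> 0 < F x \<and> F x < 1"
    and ode: "\<And>x. x \<in> I \<Longrightarrow>
        (F has_real_derivative (\<alpha> * (F x powr g - F x powr h))) (at x within I)"
    and init: "F X0 = F0"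
    and X: "X \<in> I"
  shows "X = X0
        + (F X) powr (1 - g) / (\<alpha> * (1 - g))
            * (1 + (1 - g) * (F X) powr (h - g) / (h - g)
                 * LerchPhi ((F X) powr (h - g)) 1 (1 + (1 - g) / (h - g)))
        - F0 powr (1 - g) / (\<alpha> * (1 - g))
            * (1 + (1 - g) * F0 powr (h - g) / (h - g)
                 * LerchPhi (F0 powr (h - g)) 1 (1 + (1 - g) / (h - g)))"
proof -
  define H where "H y = y powr (1 - g) * LerchPhi (y powr (h - g)) 1 ((1 - g) / (h - g)) / (h - g)"
    for y
  have nonpole: "(1 - g) / (h - g) + real n \<noteq> 0" for n :: nat
    using generic \<open>h > g\<close> by (auto simp: field_simps)
  have H': "(H has_real_derivative 1 / (F x powr g - F x powr h)) (at (F x))" if "x \<in> I" for x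
    unfolding H_def[abs_def]
    using S_distribution_antiderivative \<open>h > g\<close> range[OF that] nonpole by simp
  have speed_nonzero: "F x powr g - F x powr h \<noteq> 0" if "x \<in> I" for x
    using range[OF that] \<open>h > g\<close> powr_less_mono' by fastforce
  have separated: "H (F X) - H (F X0) = \<alpha> * (X - X0)"
    by (rule separation_of_variables[where f = "\<lambda>y. y powr g - y powr h", OF _ ode H' speed_nonzero])
      (use assms in simp_all)
  have "g \<noteq> 1"
    using generic by force
  then have closed_form: "y powr (1 - g) / (\<alpha> * (1 - g))
      * (1 + (1 - g) * y powr (h - g) / (h - g) * LerchPhi (y powr (h - g)) 1 (1 + (1 - g) / (h - g)))
      = H y / \<alpha>" if "0 < y" "y < 1" for y
    using S_distribution_closed_form[OF \<open>h > g\<close> _ that] unfolding H_def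
    by (metis mult.commute times_divide_eq_left divide_divide_eq_left)
  show ?thesis
    unfolding closed_form[OF \<open>0 < F0\<close> \<open>F0 < 1\<close>] closed_form[OF range[OF X, THEN conjunct1]
        range[OF X, THEN conjunct2]]
    using separated init \<open>\<alpha> > 0\<close> by (simp add: field_simps)
qed

end
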